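(* Let $d\ge2$, $w>0$ and $v\ge0$. For unit vectors $\boldsymbol{u}_1,\dots,\boldsymbol{u}_d\in\mathbb{R}^d$ (random vectors $\boldsymbol{w}_i=w\boldsymbol{u}_i$ all having the same length $w$) define $$\rho(\boldsymbol{u}_1,\dots,\boldsymbol{u}_d)=\frac{\Gamma(\frac d2)}{d(d-1)}\sum_{i=1}^d\sum_{j\ne i}\sum_{k=0}^\infty\frac{v^{2k}w^{2k}\|\boldsymbol{u}_i+\boldsymbol{u}_j\|_2^{2k}}{2^{2k}k!\,\Gamma(k+\frac d2)}.$$ Then $\rho$ (and its expectation, if the directions $\boldsymbol{u}_i$ are chosen randomly) is minimised when the ensemble has simplex geometry, i.e. when $\boldsymbol{u}_i^\top\boldsymbol{u}_j=-\frac{1}{d-1}$ for all $i\ne j$ (equivalently, all pairs subtend equal angles and $\sum_i\boldsymbol{u}_i=0$).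
   Context: This is the RF-conformity $\rho(\boldsymbol{x},\boldsymbol{y})$ of an ensemble of $d$ random vectors of common norm $w$, where $v=\|\boldsymbol{x}+\boldsymbol{y}\|_2$. *)

theory Defs
  imports "HOL-Analysis.Analysis"
begin

definition rf_conformity :: "nat \<Rightarrow> real \<Rightarrow> real \<Rightarrow> (nat \<Rightarrow> real ^ 'n) \<Rightarrow> real" where
  "rf_conformity d v w u =
     Gamma (real d / 2) / (real d * (real d - 1)) *
     (\<Sum>i<d. \<Sum>j\<in>{..<d} - {i}.
        (\<Sum>k. v ^ (2*k) * w ^ (2*k) * norm (u i + u j) ^ (2*k) /
              (2 ^ (2*k) * fact k * Gamma (real k + real d / 2))))"

definition simplex_ensemble :: "nat \<Rightarrow> (nat \<Rightarrow> real ^ 'n) \<Rightarrow> bool" where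
  "simplex_ensemble d s \<longleftrightarrow>
     (\<forall>i<d. norm (s i) = 1) \<and>
     (\<forall>i<d. \<forall>j<d. i \<noteq> j \<longrightarrow> s i \<bullet> s j = - 1 / (real d - 1))"

end

(* The conformity is a positive multiple of the sum over ordered pairs i \<noteq> j of F (|u i + u j|^2),
   where F is a power series with nonnegative coefficients, hence increasing and convex on [0, \<infinity>).
   For unit vectors the pairwise values have total 2 d (d - 2) + 2 |\<Sum>i. u i|^2 \<ge> 2 d (d - 2),
   and a simplex ensemble attains the corresponding mean 2 (d - 2) / (d - 1) at every pair.
   Jensen's inequality, applied termwise to the powers t^k, finishes the argument. *)

theory Submission
  imports Defs
begin

definition off_diag :: "'a set \<Rightarrow> ('a \<times> 'a) set" where
  "off_diag I = Sigma I (\<lambda>i. I - {i})"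

lemma finite_off_diag: "finite I \<Longrightarrow> finite (off_diag I)"
  by (simp add: off_diag_def)

lemma card_off_diag: "finite I \<Longrightarrow> card (off_diag I) = card I * (card I - 1)"
  by (simp add: off_diag_def card_SigmaI card_Diff_singleton)

lemma sum_off_diag: "finite I \<Longrightarrow> (\<Sum>p\<in>off_diag I. f p) = (\<Sum>i\<in>I. \<Sum>j\<in>I - {i}. f (i, j))"
  by (simp add: off_diag_def sum.Sigma)

lemma sum_off_diag_norm_add_sq:
  fixes u :: "'a \<Rightarrow> 'b :: real_inner"
  assumes "finite I" and "\<And>i. i \<in> I \<Longrightarrow> norm (u i) = 1"
  shows "(\<Sum>p\<in>off_diag I. norm (u (fst p) + u (snd p)) ^ 2)
           = 2 * real (card I) * (real (card I) - 2) + 2 * norm (\<Sum>i\<in>I. u i) ^ 2"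
proof -
  define S where "S = (\<Sum>i\<in>I. u i)"
  have unit: "u i \<bullet> u i = 1" if "i \<in> I" for i
    using assms(2)[OF that] by (simp add: power2_norm_eq_inner[symmetric])
  have row: "(\<Sum>j\<in>I - {i}. norm (u i + u j) ^ 2) = 2 * real (card I) - 4 + 2 * (u i \<bullet> S)"
    if "i \<in> I" for i
  proof -
    have "(\<Sum>j\<in>I. norm (u i + u j) ^ 2) = (\<Sum>j\<in>I. 2 + 2 * (u i \<bullet> u j))"
      using that unit by (intro sum.cong) (auto simp: power2_norm_eq_inner inner_add inner_commute)
    also have "\<dots> = 2 * real (card I) + 2 * (u i \<bullet> S)"
      by (simp add: sum.distrib sum_distrib_left S_def inner_sum_right)
    moreover have "(\<Sum>j\<in>I. norm (u i + u j) ^ 2) = norm (u i + u i) ^ 2 + (\<Sum>j\<in>I - {i}. norm (u i + u j) ^ 2)"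
      using assms(1) that by (rule sum.remove)
    moreover have "norm (u i + u i) ^ 2 = 4"
      using unit[OF that] by (simp add: power2_norm_eq_inner inner_add)
    ultimately show ?thesis by simp
  qed
  have "(\<Sum>p\<in>off_diag I. norm (u (fst p) + u (snd p)) ^ 2) = (\<Sum>i\<in>I. \<Sum>j\<in>I - {i}. norm (u i + u j) ^ 2)"
    using assms(1) by (simp add: sum_off_diag)
  also have "\<dots> = (\<Sum>i\<in>I. 2 * real (card I) - 4 + 2 * (u i \<bullet> S))"
    by (intro sum.cong) (simp_all add: row)
  also have "\<dots> = 2 * real (card I) * (real (card I) - 2) + 2 * (S \<bullet> S)"
    by (simp add: sum.distrib sum_subtractf sum_distrib_left S_def inner_sum_left algebra_simps)
  finally show ?thesis by (simp add: S_def power2_norm_eq_inner)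
qed

lemma simplex_ensemble_norm_add_sq:
  assumes "simplex_ensemble d s" and "i < d" "j < d" "i \<noteq> j"
  shows "norm (s i + s j) ^ 2 = 2 * (real d - 2) / (real d - 1)"
proof -
  have "real d - 1 > 0" using assms(2-4) by linarith
  moreover have "s i \<bullet> s i = 1" "s j \<bullet> s j = 1" "s i \<bullet> s j = - 1 / (real d - 1)"
    using assms unfolding simplex_ensemble_def by (auto simp: power2_norm_eq_inner[symmetric])
  ultimately show ?thesis
    by (simp add: power2_norm_eq_inner inner_add inner_commute field_simps)
qed

lemma convex_on_power_nonneg: "convex_on {0::real..} (\<lambda>x. x ^ n)"
  using convex_power_even[of n] convex_power_odd[of n] convex_on_subset[of UNIV] by blast

lemma card_mult_power_le_sum_power:
  fixes T :: "'a \<Rightarrow> real"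
  assumes "finite P" "P \<noteq> {}" "\<And>p. p \<in> P \<Longrightarrow> T p \<ge> 0" "t \<ge> 0"
    and "real (card P) * t \<le> (\<Sum>p\<in>P. T p)"
  shows "real (card P) * t ^ k \<le> (\<Sum>p\<in>P. T p ^ k)"
proof -
  define N where "N = real (card P)"
  have N: "N > 0" using assms(1,2) by (simp add: N_def card_gt_0_iff)
  have "t \<le> (\<Sum>p\<in>P. (1/N) * T p)"
    using assms(5) N by (simp add: N_def sum_divide_distrib[symmetric] pos_le_divide_eq mult.commute)
  then have "t ^ k \<le> (\<Sum>p\<in>P. (1/N) * T p) ^ k"
    using assms(4) by (rule power_mono)
  also have "\<dots> \<le> (\<Sum>p\<in>P. (1/N) * T p ^ k)"
    using convex_on_sum[OF assms(1,2) convex_on_power_nonneg, of "\<lambda>_. 1/N" T] N assms(3)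
    by (simp add: N_def)
  finally show ?thesis using N by (simp add: N_def sum_divide_distrib[symmetric] pos_le_divide_eq mult.commute)
qed

lemma card_mult_power_series_le_sum:
  fixes T :: "'a \<Rightarrow> real" and g :: "nat \<Rightarrow> real"
  assumes "finite P" "P \<noteq> {}" "\<And>p. p \<in> P \<Longrightarrow> T p \<ge> 0" "t \<ge> 0"
    and "real (card P) * t \<le> (\<Sum>p\<in>P. T p)"
    and "\<And>k. g k \<ge> 0" and "\<And>x. x \<ge> 0 \<Longrightarrow> summable (\<lambda>k. g k * x ^ k)"
  shows "real (card P) * (\<Sum>k. g k * t ^ k) \<le> (\<Sum>p\<in>P. \<Sum>k. g k * T p ^ k)"
proof -
  have "real (card P) * (\<Sum>k. g k * t ^ k) = (\<Sum>k. real (card P) * (g k * t ^ k))"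
    using assms(4,7) by (simp add: suminf_mult)
  also have "\<dots> \<le> (\<Sum>k. \<Sum>p\<in>P. g k * T p ^ k)"
  proof (rule suminf_le)
    show "real (card P) * (g k * t ^ k) \<le> (\<Sum>p\<in>P. g k * T p ^ k)" for k
      using mult_left_mono[OF card_mult_power_le_sum_power[OF assms(1-5), of k] assms(6)[of k]]
      by (simp add: sum_distrib_left mult.left_commute)
    show "summable (\<lambda>k. real (card P) * (g k * t ^ k))"
      using assms(4,7) by (intro summable_mult)
    show "summable (\<lambda>k. \<Sum>p\<in>P. g k * T p ^ k)"
      by (rule summable_sum) (use assms(3,7) in auto)
  qed
  also have "\<dots> = (\<Sum>p\<in>P. \<Sum>k. g k * T p ^ k)"
    by (rule suminf_sum) (use assms(3,7) in auto)
  finally show ?thesis .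
qed

lemma Gamma_le_Gamma_add_nat:
  fixes a :: real
  assumes "a \<ge> 1"
  shows "Gamma a \<le> Gamma (a + real k)"
proof -
  have "a \<notin> \<int>\<^sub>\<le>\<^sub>0" using assms nonpos_Ints_nonpos[of a] by linarith
  then have "pochhammer a k = Gamma (a + real k) / Gamma a"
    by (rule pochhammer_Gamma)
  moreover have "pochhammer a k \<ge> 1"
    unfolding pochhammer_prod using assms by (intro prod_ge_1) auto
  moreover have "Gamma a > 0" using assms by simp
  ultimately show ?thesis
    using mult_left_mono[of 1 "pochhammer a k" "Gamma a"] by (simp add: field_simps)
qed

text \<open>\<open>\<Sum>k. bessel_coeff a c k * t ^ k = (c t)^((1 - a)/2) I\<^sub>a\<^sub>-\<^sub>1(2 \<surd>(c t))\<close>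
  for the modified Bessel function \<open>I\<close>.\<close>
definition bessel_coeff :: "real \<Rightarrow> real \<Rightarrow> nat \<Rightarrow> real" where
  "bessel_coeff a c k = c ^ k / (fact k * Gamma (real k + a))"

lemma bessel_coeff_nonneg: "a > 0 \<Longrightarrow> c \<ge> 0 \<Longrightarrow> bessel_coeff a c k \<ge> 0"
  by (simp add: bessel_coeff_def)

lemma summable_bessel_coeff:
  assumes "a \<ge> 1"
  shows "summable (\<lambda>k. bessel_coeff a c k * x ^ k)"
proof (rule summable_comparison_test')
  show "summable (\<lambda>k. inverse (Gamma a) * (inverse (fact k) * \<bar>c * x\<bar> ^ k))"
    by (intro summable_mult summable_exp)
  fix k :: nat
  have "Gamma a > 0" using assms by simp
  moreover have "Gamma a \<le> Gamma (real k + a)"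
    using Gamma_le_Gamma_add_nat[OF assms, of k] by (simp add: add.commute)
  ultimately have "\<bar>c * x\<bar> ^ k / (fact k * Gamma (real k + a)) \<le> \<bar>c * x\<bar> ^ k / (fact k * Gamma a)"
    by (intro divide_left_mono mult_left_mono mult_pos_pos) auto
  then show "norm (bessel_coeff a c k * x ^ k) \<le> inverse (Gamma a) * (inverse (fact k) * \<bar>c * x\<bar> ^ k)"
    using \<open>Gamma a > 0\<close> \<open>Gamma a \<le> Gamma (real k + a)\<close>
    by (simp add: bessel_coeff_def abs_mult power_abs power_mult_distrib divide_inverse mult_ac)
qed

lemma rf_conformity_eq_bessel_series:
  "rf_conformity d v w u = Gamma (real d / 2) / (real d * (real d - 1)) *
     (\<Sum>p\<in>off_diag {..<d}. \<Sum>k. bessel_coeff (real d / 2) ((v * w / 2) ^ 2) k *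
        (norm (u (fst p) + u (snd p)) ^ 2) ^ k)"
proof -
  have four: "(2::real) ^ (2*k) = 4 ^ k" for k by (simp add: power_mult)
  have "v ^ (2*k) * w ^ (2*k) * r ^ (2*k) / (2 ^ (2*k) * fact k * Gamma (real k + real d / 2))
      = bessel_coeff (real d / 2) ((v * w / 2) ^ 2) k * (r ^ 2) ^ k" for r :: real and k
    by (simp add: bessel_coeff_def power_mult[symmetric] power_mult_distrib power_divide four)
  then show ?thesis
    unfolding rf_conformity_def by (simp add: sum_off_diag)
qed

theorem lemmaA1:
  fixes u s :: "nat \<Rightarrow> real ^ 'n" and v w :: real
  assumes "CARD('n) \<ge> 2" and "w > 0" and "v \<ge> 0"
    and "\<forall>i<CARD('n). norm (u i) = 1"
    and "simplex_ensemble CARD('n) s"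
  shows "rf_conformity CARD('n) v w s \<le> rf_conformity CARD('n) v w u"
proof -
  define d where "d = CARD('n)"
  define P where "P = off_diag {..<d}"
  define F where "F t = (\<Sum>k. bessel_coeff (real d / 2) ((v * w / 2) ^ 2) k * t ^ k)" for t
  define t where "t = 2 * (real d - 2) / (real d - 1)"
  have d: "d \<ge> 2" using assms(1) by (simp add: d_def)
  have P: "finite P" "real (card P) = real d * (real d - 1)"
    using d by (simp_all add: P_def finite_off_diag card_off_diag)
  have "(0, 1) \<in> P" using d by (simp add: P_def off_diag_def)
  then have "P \<noteq> {}" by blast
  have "(\<Sum>p\<in>P. F (norm (s (fst p) + s (snd p)) ^ 2)) = (\<Sum>p\<in>P. F t)"
    using simplex_ensemble_norm_add_sq[OF assms(5)]
    by (intro sum.cong refl) (force simp: P_def off_diag_def t_def d_def)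
  then have simplex: "(\<Sum>p\<in>P. F (norm (s (fst p) + s (snd p)) ^ 2)) = real (card P) * F t"
    by simp
  have "real (card P) * t = 2 * real d * (real d - 2)"
    using d by (simp add: P(2) t_def)
  also have "\<dots> \<le> (\<Sum>p\<in>P. norm (u (fst p) + u (snd p)) ^ 2)"
    using sum_off_diag_norm_add_sq[of "{..<d}" u] assms(4) by (simp add: P_def d_def)
  finally have "real (card P) * F t \<le> (\<Sum>p\<in>P. F (norm (u (fst p) + u (snd p)) ^ 2))"
    unfolding F_def using d
    by (intro card_mult_power_series_le_sum P(1) \<open>P \<noteq> {}\<close> bessel_coeff_nonneg summable_bessel_coeff)
       (auto simp: t_def)
  moreover have "Gamma (real d / 2) / (real d * (real d - 1)) \<ge> 0"
    using d by simp
  ultimately show ?thesis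
    unfolding rf_conformity_eq_bessel_series d_def[symmetric] P_def[symmetric] F_def[symmetric] simplex
    by (rule mult_left_mono)
qed

end
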